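(* Let $s\in[0,1)$, let $\Omega\subset\mathbb{R}^N$ be a bounded open Lipschitz set, let $V,f\in L^\infty(\Omega)$, and let $u\in\mathbb{H}^s(\Omega)$ be a weak solution of $\mathcal{D}^s_\Omega u+V(x)u=f$ in $\Omega$, i.e. $$\mathcal{E}_s(u,\phi)+\int_\Omega V u\phi\,dx=\int_\Omega f\phi\,dx\qquad\text{for all }\phi\in\mathbb{H}^s(\Omega).$$ Then $u\in L^\infty(\Omega)$, and there exists a constant $c_0>0$ depending only on $N$, $\Omega$, $\|V\|_{L^\infty(\Omega)}$, $\|f\|_{L^\infty(\Omega)}$ and $\|u\|_{L^2(\Omega)}$, and independent of $s$, such that $\|u\|_{L^\infty(\Omega)}\le c_0$.
   Context: A bounded open set $\Omega\subset\mathbb{R}^N$ is a Lipschitz set if each boundary point has a neighborhood in which $\partial\Omega$ is, after rotation, the graph of a Lipschitz function. For $s\in[0,1)$: $\mathbb{H}^s(\Omega)=\{u\in L^2(\Omega):\int_\Omega\int_\Omega\frac{(u(x)-u(y))^2}{|x-y|^{N+2s}}dxdy<\infty\}$ and $\mathcal{E}_s(u,v)=\frac12\int_\Omega\int_\Omega\frac{(u(x)-u(y))(v(x)-v(y))}{|x-y|^{N+2s}}dxdy$; the operator $\mathcal{D}^s_\Omega u(x)=\lim_{\varepsilon\to0^+}\int_{\Omega\setminus B_\varepsilon(x)}\frac{u(x)-u(y)}{|x-y|^{N+2s}}dy$ is the one whose weak form is $\mathcal{E}_s$. *)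

theory Defs
  imports "HOL-Analysis.Analysis" "HOL-Probability.Essential_Supremum"
begin

text \<open>Lipschitz set: every boundary point p has an open neighbourhood U, a unit
  direction e (the rotated N-th axis) and a Lipschitz function g defined on the
  hyperplane orthogonal to e (a copy of R^(N-1)), such that inside U the set is the
  region below the graph of g and its boundary is the graph of g.\<close>
definition lipschitz_set :: "'a::euclidean_space set \<Rightarrow> bool" where
  "lipschitz_set \<Omega> \<longleftrightarrow>
     (\<forall>p \<in> frontier \<Omega>. \<exists>U e g L.
        open U \<and> p \<in> U \<and> norm e = 1 \<and>
        lipschitz_on L {z. z \<bullet> e = 0} (g :: 'a \<Rightarrow> real) \<and>
        \<Omega> \<inter> U = {x \<in> U. x \<bullet> e < g (x - (x \<bullet> e) *\<^sub>R e)} \<and>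
        frontier \<Omega> \<inter> U = {x \<in> U. x \<bullet> e = g (x - (x \<bullet> e) *\<^sub>R e)})"

definition Linf_norm :: "'a::euclidean_space set \<Rightarrow> ('a \<Rightarrow> real) \<Rightarrow> real" where
  "Linf_norm \<Omega> u = real_of_ereal (esssup (lebesgue_on \<Omega>) (\<lambda>x. ereal \<bar>u x\<bar>))"

definition Linf :: "'a::euclidean_space set \<Rightarrow> ('a \<Rightarrow> real) set" where
  "Linf \<Omega> = {u. u \<in> borel_measurable (lebesgue_on \<Omega>) \<and>
                  esssup (lebesgue_on \<Omega>) (\<lambda>x. ereal \<bar>u x\<bar>) < \<infinity>}"

definition L2 :: "'a::euclidean_space set \<Rightarrow> ('a \<Rightarrow> real) set" where
  "L2 \<Omega> = {u. u \<in> borel_measurable (lebesgue_on \<Omega>) \<and>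
                integrable (lebesgue_on \<Omega>) (\<lambda>x. (u x)\<^sup>2)}"

definition L2_norm :: "'a::euclidean_space set \<Rightarrow> ('a \<Rightarrow> real) \<Rightarrow> real" where
  "L2_norm \<Omega> u = sqrt (integral\<^sup>L (lebesgue_on \<Omega>) (\<lambda>x. (u x)\<^sup>2))"

definition kern :: "real \<Rightarrow> 'a::euclidean_space \<Rightarrow> 'a \<Rightarrow> real" where
  "kern s x y = 1 / norm (x - y) powr (real DIM('a) + 2 * s)"

definition Hs :: "real \<Rightarrow> 'a::euclidean_space set \<Rightarrow> ('a \<Rightarrow> real) set" where
  "Hs s \<Omega> = {u. u \<in> L2 \<Omega> \<and>
     integrable (lebesgue_on \<Omega> \<Otimes>\<^sub>M lebesgue_on \<Omega>)
       (\<lambda>(x, y). (u x - u y)\<^sup>2 * kern s x y)}"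

definition Es :: "real \<Rightarrow> 'a::euclidean_space set \<Rightarrow> ('a \<Rightarrow> real) \<Rightarrow> ('a \<Rightarrow> real) \<Rightarrow> real" where
  "Es s \<Omega> u v = 1/2 * integral\<^sup>L (lebesgue_on \<Omega> \<Otimes>\<^sub>M lebesgue_on \<Omega>)
       (\<lambda>(x, y). (u x - u y) * (v x - v y) * kern s x y)"

definition weak_solution ::
  "real \<Rightarrow> 'a::euclidean_space set \<Rightarrow> ('a \<Rightarrow> real) \<Rightarrow> ('a \<Rightarrow> real) \<Rightarrow> ('a \<Rightarrow> real) \<Rightarrow> bool" where
  "weak_solution s \<Omega> V f u \<longleftrightarrow> u \<in> Hs s \<Omega> \<and>
     (\<forall>\<phi> \<in> Hs s \<Omega>. Es s \<Omega> u \<phi> + integral\<^sup>L (lebesgue_on \<Omega>) (\<lambda>x. V x * u x * \<phi> x)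
                   = integral\<^sup>L (lebesgue_on \<Omega>) (\<lambda>x. f x * \<phi> x))"

end

theory Submission
  imports Defs
begin

(* Stampacchia truncation. With a = ||V||, b = ||f|| and w = (u - k)+, testing the equation with
   w gives E_s(u, w) <= b * int w + a * int u w. In the other direction the singular kernel is
   replaced by a bounded symmetric kernel K below it whose row integrals int K(x, y) dy are at
   least a + 1, with a bound B on K that does not depend on s; symmetrising the double integral
   gives E_s(u, w) >= (a + 1) * int u w - B * int |u| * int w. Together,
   int w^2 = int u w - k * int w <= 0 as soon as k >= b + B * int |u|, so u <= k almost
   everywhere; the same argument applies to -u.

   One can take K = min (|x - y|^(-N-2s)) (min m |x - y|^(-N) / D^2) with D = max 1 (diam Omega).
   Its row integrals become uniformly large as m grows: a Lipschitz set satisfies an interior cone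
   condition at each point of its closure, the axis of such a cone carries arbitrarily many
   disjoint balls each contributing a fixed amount to int min m |x - y|^(-N) dy, and continuity in
   x together with compactness of the closure makes the choice of m uniform. *)

section \<open>Interior cones of Lipschitz sets\<close>

lemma ball_along_direction_subset_ball:
  fixes x e :: "'a::real_normed_vector"
  assumes "norm e = 1" and "0 \<le> \<delta>" "\<delta> \<le> 1" and "0 < t" "2 * t \<le> r"
  shows "ball (x - t *\<^sub>R e) (\<delta> * t) \<subseteq> ball x r"
proof
  fix y assume y: "y \<in> ball (x - t *\<^sub>R e) (\<delta> * t)"
  have "dist x y \<le> dist x (x - t *\<^sub>R e) + dist (x - t *\<^sub>R e) y" by (rule dist_triangle)
  also have "\<dots> < t + \<delta> * t" using y assms by (simp add: dist_norm)
  also have "\<dots> \<le> r" using mult_right_mono[of \<delta> 1 t] assms by linarith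
  finally show "y \<in> ball x r" by simp
qed

lemma ball_below_lipschitz_graph:
  fixes x e :: "'a::euclidean_space" and g :: "'a \<Rightarrow> real"
  assumes e: "norm e = 1" and g: "lipschitz_on L {z. z \<bullet> e = 0} g"
    and x: "x \<bullet> e = g (x - (x \<bullet> e) *\<^sub>R e)"
    and "0 < t" "0 \<le> \<delta>" "\<delta> * (1 + 2 * L) \<le> 1"
  shows "ball (x - t *\<^sub>R e) (\<delta> * t) \<subseteq> {y. y \<bullet> e < g (y - (y \<bullet> e) *\<^sub>R e)}"
proof
  fix y assume "y \<in> ball (x - t *\<^sub>R e) (\<delta> * t)"
  define v where "v = y - (x - t *\<^sub>R e)"
  have v: "norm v < \<delta> * t" using \<open>y \<in> _\<close> by (simp add: v_def dist_norm norm_minus_commute)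
  have ee: "e \<bullet> e = 1" using e by (simp add: dot_square_norm)
  have L: "0 \<le> L" using g by (simp add: lipschitz_on_def)
  have ve: "\<bar>v \<bullet> e\<bar> \<le> norm v" using Cauchy_Schwarz_ineq2[of v e] e by simp
  have proj: "(z - (z \<bullet> e) *\<^sub>R e) \<bullet> e = 0" for z by (simp add: inner_diff_left ee)
  have y: "y = x - t *\<^sub>R e + v" by (simp add: v_def)
  then have ye: "y \<bullet> e = x \<bullet> e - t + v \<bullet> e"
    by (simp add: inner_add_left inner_diff_left ee)
  have "y - (y \<bullet> e) *\<^sub>R e = (x - t *\<^sub>R e + v) - (x \<bullet> e - t + v \<bullet> e) *\<^sub>R e"
    using y ye by simp
  also have "\<dots> = (x - (x \<bullet> e) *\<^sub>R e) + (v - (v \<bullet> e) *\<^sub>R e)"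
    by (simp add: algebra_simps)
  finally have "dist (y - (y \<bullet> e) *\<^sub>R e) (x - (x \<bullet> e) *\<^sub>R e) = norm (v - (v \<bullet> e) *\<^sub>R e)"
    by (simp add: dist_norm)
  also have "\<dots> \<le> 2 * norm v"
    using norm_triangle_ineq4[of v "(v \<bullet> e) *\<^sub>R e"] ve e by simp
  finally have "L * dist (y - (y \<bullet> e) *\<^sub>R e) (x - (x \<bullet> e) *\<^sub>R e) \<le> L * (2 * norm v)"
    using L by (rule mult_left_mono)
  then have "\<bar>g (y - (y \<bullet> e) *\<^sub>R e) - g (x - (x \<bullet> e) *\<^sub>R e)\<bar> \<le> L * (2 * norm v)"
    using lipschitz_onD[OF g, of "y - (y \<bullet> e) *\<^sub>R e" "x - (x \<bullet> e) *\<^sub>R e"] proj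
    by (simp add: dist_real_def)
  moreover have "L * (2 * norm v) \<le> L * (2 * (\<delta> * t))" using v L by (intro mult_left_mono) auto
  moreover have "\<delta> * t + L * (2 * (\<delta> * t)) \<le> t"
    using mult_right_mono[OF \<open>\<delta> * (1 + 2 * L) \<le> 1\<close>, of t] \<open>0 < t\<close> by (simp add: algebra_simps)
  ultimately show "y \<in> {y. y \<bullet> e < g (y - (y \<bullet> e) *\<^sub>R e)}"
    using ye ve v x by simp
qed

lemma lipschitz_set_interior_cone:
  fixes \<Omega> :: "'a::euclidean_space set"
  assumes "open \<Omega>" and "lipschitz_set \<Omega>" and "x \<in> closure \<Omega>"
  obtains e \<delta> t0 where "norm e = 1" "0 < \<delta>" "\<delta> < 1" "0 < t0"
    "\<And>t. 0 < t \<Longrightarrow> t \<le> t0 \<Longrightarrow> ball (x - t *\<^sub>R e) (\<delta> * t) \<subseteq> \<Omega>"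
proof (cases "x \<in> \<Omega>")
  case True
  then obtain r where "r > 0" "ball x r \<subseteq> \<Omega>" using \<open>open \<Omega>\<close> open_contains_ball by blast
  moreover obtain e :: 'a where "e \<in> Basis" using nonempty_Basis by blast
  moreover have "ball (x - t *\<^sub>R e) (1/2 * t) \<subseteq> ball x r" if "0 < t" "t \<le> r/2" for t
    using \<open>e \<in> Basis\<close> that by (intro ball_along_direction_subset_ball) auto
  ultimately show ?thesis by (intro that[of e "1/2" "r/2"]) auto
next
  case False
  with assms have "x \<in> frontier \<Omega>" by (simp add: frontier_def interior_open)
  then obtain U e g L where U: "open U" "x \<in> U" and e: "norm e = 1"
    and g: "lipschitz_on L {z. z \<bullet> e = 0} (g :: 'a \<Rightarrow> real)"
    and below: "\<Omega> \<inter> U = {y \<in> U. y \<bullet> e < g (y - (y \<bullet> e) *\<^sub>R e)}"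
    and graph: "frontier \<Omega> \<inter> U = {y \<in> U. y \<bullet> e = g (y - (y \<bullet> e) *\<^sub>R e)}"
    using \<open>lipschitz_set \<Omega>\<close> unfolding lipschitz_set_def by (elim ballE exE conjE) auto
  have L: "0 \<le> L" using g by (simp add: lipschitz_on_def)
  obtain r where r: "r > 0" "ball x r \<subseteq> U" using U open_contains_ball by blast
  define \<delta> where "\<delta> = 1 / (2 * L + 2)"
  have \<delta>: "0 < \<delta>" "\<delta> \<le> 1/2" "\<delta> * (1 + 2 * L) \<le> 1" using L by (auto simp: \<delta>_def field_simps)
  have "x \<bullet> e = g (x - (x \<bullet> e) *\<^sub>R e)" using graph \<open>x \<in> frontier \<Omega>\<close> U by blast
  then have "ball (x - t *\<^sub>R e) (\<delta> * t) \<subseteq> \<Omega> \<inter> U" if "0 < t" "t \<le> r/2" for t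
    using ball_below_lipschitz_graph[OF e g _ \<open>0 < t\<close>, where \<delta>=\<delta>] \<delta>
      ball_along_direction_subset_ball[OF e, of \<delta> t r x] r that unfolding below by auto
  with e \<delta> r show ?thesis by (intro that[of e \<delta> "r/2"]) auto
qed

section \<open>A truncated Riesz kernel\<close>

(* For m > 0 this is min m |z|^(-N). *)
definition capped_riesz :: "real \<Rightarrow> 'a::euclidean_space \<Rightarrow> real" where
  "capped_riesz m z = 1 / max (1/m) (norm z ^ DIM('a))"

lemma capped_riesz_nonneg: "0 \<le> capped_riesz m z"
  unfolding capped_riesz_def by (simp add: le_max_iff_disj)

lemma capped_riesz_le:
  assumes "0 < m" shows "capped_riesz m z \<le> m"
proof -
  have "capped_riesz m z \<le> 1 / (1/m)"
    unfolding capped_riesz_def using assms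
    by (intro divide_left_mono) (auto intro: mult_pos_pos simp: less_max_iff_disj)
  then show ?thesis by simp
qed

lemma abs_capped_riesz_le: "0 < m \<Longrightarrow> \<bar>capped_riesz m z\<bar> \<le> m"
  using capped_riesz_nonneg[of m z] capped_riesz_le[of m z] by simp

lemma capped_riesz_le_riesz:
  "z \<noteq> 0 \<Longrightarrow> capped_riesz m z \<le> 1 / norm (z :: 'a::euclidean_space) ^ DIM('a)"
  unfolding capped_riesz_def by (intro divide_left_mono) (auto intro: mult_pos_pos simp: less_max_iff_disj)

lemma capped_riesz_ge:
  assumes "0 < r" "norm z \<le> r" "1 / r ^ DIM('a) \<le> m"
  shows "1 / r ^ DIM('a) \<le> capped_riesz m (z :: 'a::euclidean_space)"
proof -
  have "0 < 1 / r ^ DIM('a)" using assms by simp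
  then have m: "0 < m" using assms by linarith
  then have "1 / m \<le> r ^ DIM('a)" using assms by (simp add: field_simps)
  moreover have "norm z ^ DIM('a) \<le> r ^ DIM('a)" using assms by (intro power_mono) auto
  ultimately show ?thesis
    unfolding capped_riesz_def using assms m
    by (intro divide_left_mono) (auto intro!: mult_pos_pos simp: less_max_iff_disj)
qed

lemma capped_riesz_mono: "0 < m \<Longrightarrow> m \<le> m' \<Longrightarrow> capped_riesz m z \<le> capped_riesz m' z"
  unfolding capped_riesz_def
  by (intro divide_left_mono max.mono divide_left_mono) (auto simp: less_max_iff_disj)

lemma isCont_capped_riesz: "0 < m \<Longrightarrow> isCont (capped_riesz m) (z :: 'a::euclidean_space)"
proof -
  assume "0 < m"
  then have "0 < max (1/m) (norm z ^ DIM('a))" by (simp add: less_max_iff_disj)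
  then show ?thesis unfolding capped_riesz_def by (intro continuous_intros) auto
qed

lemma borel_measurable_capped_riesz [measurable]: "capped_riesz m \<in> borel_measurable borel"
  unfolding capped_riesz_def by measurable

lemmas borel_measurable_ident_lebesgue_on [measurable] =
  id_borel_measurable_lebesgue_on[unfolded id_def]

lemma integrable_capped_riesz:
  assumes "S \<in> lmeasurable" "0 < m"
  shows "integrable (lebesgue_on S) (\<lambda>y. capped_riesz m (x - y))"
proof -
  have "(\<lambda>y. capped_riesz m (x - y)) \<in> borel_measurable (lebesgue_on S)" by measurable
  then show ?thesis
    using assms abs_capped_riesz_le
    by (intro finite_measure.integrable_const_bound[OF finite_measure_lebesgue_on, where B=m] AE_I2)
      auto
qed

lemma disjoint_balls_along_ray:
  fixes x e :: "'a::real_normed_vector"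
  assumes "norm e = 1" "(1 + \<delta>) * t' \<le> (1 - \<delta>) * t"
  shows "ball (x - t *\<^sub>R e) (\<delta> * t) \<inter> ball (x - t' *\<^sub>R e) (\<delta> * t') = {}"
proof (rule ccontr)
  assume "ball (x - t *\<^sub>R e) (\<delta> * t) \<inter> ball (x - t' *\<^sub>R e) (\<delta> * t') \<noteq> {}"
  then obtain y where y: "dist (x - t *\<^sub>R e) y < \<delta> * t" "dist (x - t' *\<^sub>R e) y < \<delta> * t'"
    by auto
  have "t - t' \<le> dist (x - t *\<^sub>R e) (x - t' *\<^sub>R e)"
    using assms(1) by (simp add: dist_norm flip: scaleR_diff_left)
  also have "\<dots> \<le> dist (x - t *\<^sub>R e) y + dist (x - t' *\<^sub>R e) y" by (rule dist_triangle2)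
  finally show False using y assms(2) by (simp add: algebra_simps)
qed

lemma capped_riesz_ge_on_ball_along_ray:
  fixes x y e :: "'a::euclidean_space"
  assumes "norm e = 1" "0 < t" "0 \<le> \<delta>" "y \<in> ball (x - t *\<^sub>R e) (\<delta> * t)"
    and "1 / ((1 + \<delta>) * t) ^ DIM('a) \<le> m"
  shows "1 / ((1 + \<delta>) * t) ^ DIM('a) \<le> capped_riesz m (x - y)"
proof (rule capped_riesz_ge)
  have "norm (x - y) \<le> dist x (x - t *\<^sub>R e) + dist (x - t *\<^sub>R e) y"
    by (metis dist_norm dist_triangle)
  also have "\<dots> \<le> (1 + \<delta>) * t" using assms by (simp add: dist_norm algebra_simps)
  finally show "norm (x - y) \<le> (1 + \<delta>) * t" .
qed (use assms in auto)

lemma integral_ge_sum_disjoint: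
  fixes g :: "'a \<Rightarrow> real"
  assumes "finite_measure M" "integrable M g" "\<And>x. 0 \<le> g x"
    and "finite I" "disjoint_family_on B I" "\<And>i. i \<in> I \<Longrightarrow> B i \<in> sets M"
    and "\<And>i x. i \<in> I \<Longrightarrow> x \<in> B i \<Longrightarrow> c i \<le> g x"
  shows "(\<Sum>i\<in>I. c i * measure M (B i)) \<le> integral\<^sup>L M g"
proof -
  interpret finite_measure M by fact
  have B_int: "integrable M (\<lambda>x. c i * indicator (B i) x)" if "i \<in> I" for i
    using assms(6)[OF that]
    by (intro Bochner_Integration.integrable_mult_right integrable_real_indicator)
      (simp_all add: emeasure_finite less_top[symmetric])
  have "(\<Sum>i\<in>I. c i * indicator (B i) x) \<le> g x" for x
  proof -
    have "(\<Sum>i\<in>I. c i * indicator (B i) x) \<le> (\<Sum>i\<in>I. g x * indicator (B i) x)"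
      using assms(7) by (intro sum_mono) (simp add: indicator_def)
    also have "\<dots> = g x * indicator (\<Union>i\<in>I. B i) x"
      using assms(4,5) by (simp add: indicator_UN_disjoint sum_distrib_left)
    also have "\<dots> \<le> g x" using assms(3)[of x] by (simp add: indicator_def)
    finally show ?thesis .
  qed
  then have "(\<integral>x. (\<Sum>i\<in>I. c i * indicator (B i) x) \<partial>M) \<le> integral\<^sup>L M g"
    using B_int assms(2) by (intro integral_mono Bochner_Integration.integrable_sum) auto
  moreover have "(\<integral>x. (\<Sum>i\<in>I. c i * indicator (B i) x) \<partial>M) = (\<Sum>i\<in>I. c i * measure M (B i))"
    using B_int assms(6) by (simp add: Bochner_Integration.integral_sum Int_absorb2 sets.sets_into_space)
  ultimately show ?thesis by simp
qed

lemma integral_capped_riesz_large_at_cone_vertex: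
  fixes \<Omega> :: "'a::euclidean_space set"
  assumes \<Omega>: "\<Omega> \<in> lmeasurable" and e: "norm e = 1" and \<delta>: "0 < \<delta>" "\<delta> < 1" and "0 < t0"
    and cone: "\<And>t. 0 < t \<Longrightarrow> t \<le> t0 \<Longrightarrow> ball (x - t *\<^sub>R e) (\<delta> * t) \<subseteq> \<Omega>"
  shows "\<exists>m>0. T < (\<integral>y. capped_riesz m (x - y) \<partial>lebesgue_on \<Omega>)"
proof -
  define N where "N = DIM('a)"
  define q where "q = (1 - \<delta>) / (1 + \<delta>)"
  define t where "t j = t0 * q ^ j" for j :: nat
  define B where "B j = ball (x - t j *\<^sub>R e) (\<delta> * t j)" for j
  define c where "c j = 1 / ((1 + \<delta>) * t j) ^ N" for j
  define \<theta> where "\<theta> = unit_ball_vol N * (\<delta> / (1 + \<delta>)) ^ N"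
  have q: "0 < q" "q \<le> 1" using \<delta> by (auto simp: q_def)
  have t: "0 < t j" "t j \<le> t0" for j
    using q \<open>0 < t0\<close> by (auto simp: t_def power_le_one mult_left_le)
  have t_antimono: "t j \<le> t i" if "i \<le> j" for i j
    using q that \<open>0 < t0\<close> by (simp add: t_def power_decreasing mult_left_mono)
  have "B i \<inter> B j = {}" if "i < j" for i j
  proof -
    have "t j \<le> q * t i" using t_antimono[of "Suc i" j] that by (simp add: t_def mult_ac)
    then have "(1 + \<delta>) * t j \<le> (1 + \<delta>) * (q * t i)" using \<delta> by (intro mult_left_mono) auto
    also have "\<dots> = (1 - \<delta>) * t i" using \<delta> by (simp add: q_def)
    finally show ?thesis unfolding B_def by (rule disjoint_balls_along_ray[OF e])
  qed
  then have "disjoint_family B"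
    unfolding disjoint_family_on_def by (metis Int_commute linorder_neqE_nat)
  have B_sub: "B j \<subseteq> \<Omega>" for j using cone[OF t(1,2)] by (simp add: B_def)
  have B_sets: "B j \<in> sets (lebesgue_on \<Omega>)" for j
    using \<Omega> B_sub[of j] unfolding B_def by (simp add: sets_restrict_space_iff)
  have measure_B: "c j * measure (lebesgue_on \<Omega>) (B j) = \<theta>" for j
  proof -
    have "measure (lebesgue_on \<Omega>) (B j) = unit_ball_vol N * (\<delta> * t j) ^ N"
      using \<Omega> B_sub content_ball[of "\<delta> * t j" "x - t j *\<^sub>R e"] \<delta> t[of j]
      by (subst measure_restrict_space) (auto simp: B_def N_def)
    then show ?thesis using t[of j] by (simp add: c_def \<theta>_def power_divide power_mult_distrib)
  qed
  have "0 < \<theta>" using \<delta> by (simp add: \<theta>_def unit_ball_vol_pos)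
  then obtain J :: nat where J: "T < real J * \<theta>" using ex_less_of_nat_mult by blast
  define m where "m = c J"
  have m: "0 < m" using \<delta> t[of J] by (simp add: m_def c_def)
  have "c j \<le> capped_riesz m (x - y)" if "j < J" "y \<in> B j" for j y
  proof -
    have "c j \<le> m"
      unfolding m_def c_def using \<delta> t[of J] that t_antimono[of j J]
      by (intro divide_left_mono power_mono mult_left_mono) auto
    then show ?thesis
      using capped_riesz_ge_on_ball_along_ray[OF e t(1), where \<delta>=\<delta> and x=x and y=y and m=m] \<delta> that
      by (simp add: c_def N_def B_def)
  qed
  then have "(\<Sum>j<J. c j * measure (lebesgue_on \<Omega>) (B j)) \<le> (\<integral>y. capped_riesz m (x - y) \<partial>lebesgue_on \<Omega>)"
    using \<Omega> B_sets capped_riesz_nonneg disjoint_family_on_mono[OF subset_UNIV \<open>disjoint_family B\<close>]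
    by (intro integral_ge_sum_disjoint finite_measure_lebesgue_on integrable_capped_riesz m) auto
  then have "real J * \<theta> \<le> (\<integral>y. capped_riesz m (x - y) \<partial>lebesgue_on \<Omega>)" by (simp add: measure_B)
  with J m show ?thesis by (intro exI[of _ m]) auto
qed

lemma isCont_integral_capped_riesz:
  assumes S: "S \<in> lmeasurable" and m: "0 < m"
  shows "isCont (\<lambda>x. \<integral>y. capped_riesz m (x - y) \<partial>lebesgue_on S) (l :: 'a::euclidean_space)"
proof (rule continuous_at_sequentiallyI)
  fix X assume X: "X \<longlonglongrightarrow> l"
  show "(\<lambda>n. \<integral>y. capped_riesz m (X n - y) \<partial>lebesgue_on S)
      \<longlonglongrightarrow> (\<integral>y. capped_riesz m (l - y) \<partial>lebesgue_on S)"
  proof (rule integral_dominated_convergence[where w="\<lambda>_. m"])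
    show "integrable (lebesgue_on S) (\<lambda>_. m)"
      using finite_measure_lebesgue_on[OF S] by (simp add: finite_measure.integrable_const)
    show "AE y in lebesgue_on S. (\<lambda>n. capped_riesz m (X n - y)) \<longlonglongrightarrow> capped_riesz m (l - y)"
      using X by (intro AE_I2 isCont_tendsto_compose[OF isCont_capped_riesz[OF m]] tendsto_intros)
    show "AE y in lebesgue_on S. norm (capped_riesz m (X n - y)) \<le> m" for n
      using abs_capped_riesz_le[OF m] by (intro AE_I2) simp
  qed measurable
qed

lemma integral_capped_riesz_uniformly_large:
  fixes \<Omega> :: "'a::euclidean_space set"
  assumes "bounded \<Omega>" "open \<Omega>" "lipschitz_set \<Omega>"
  shows "\<exists>m>0. \<forall>x\<in>\<Omega>. T \<le> (\<integral>y. capped_riesz m (x - y) \<partial>lebesgue_on \<Omega>)"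
proof (rule ccontr)
  define G where "G m x = (\<integral>y. capped_riesz m (x - y) \<partial>lebesgue_on \<Omega>)" for m x
  have \<Omega>: "\<Omega> \<in> lmeasurable" using assms by (intro lmeasurable_open)
  have G_mono: "G m x \<le> G m' x" if "0 < m" "m \<le> m'" for m m' x
    unfolding G_def using that
    by (intro integral_mono integrable_capped_riesz[OF \<Omega>] capped_riesz_mono) auto
  assume "\<not> ?thesis"
  then have small: "\<forall>m>0. \<exists>x\<in>\<Omega>. G m x < T" by (auto simp: G_def not_le)
  have "\<exists>x\<in>\<Omega>. G (real n + 1) x < T" for n
    using small[rule_format, of "real n + 1"] by simp
  then have "\<forall>n. \<exists>x. x \<in> \<Omega> \<and> G (real n + 1) x < T" by blast
  from choice[OF this] obtain X where X: "\<And>n. X n \<in> \<Omega>" "\<And>n. G (real n + 1) (X n) < T"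
    by blast
  have "seq_compact (closure \<Omega>)"
    using assms by (simp add: compact_closure compact_imp_seq_compact)
  then obtain l r where "l \<in> closure \<Omega>" "strict_mono r" and lim: "(X \<circ> r) \<longlonglongrightarrow> l"
    using X(1) closure_subset by (metis seq_compactE subsetD)
  then obtain e \<delta> t0 where "norm e = 1" "0 < \<delta>" "\<delta> < 1" "0 < t0"
    "\<And>t. 0 < t \<Longrightarrow> t \<le> t0 \<Longrightarrow> ball (l - t *\<^sub>R e) (\<delta> * t) \<subseteq> \<Omega>"
    using lipschitz_set_interior_cone assms by metis
  then obtain m where m: "0 < m" "T < G m l"
    unfolding G_def using integral_capped_riesz_large_at_cone_vertex[OF \<Omega>] by metis
  have "(\<lambda>j. G m (X (r j))) \<longlonglongrightarrow> G m l"
    using isCont_tendsto_compose[OF isCont_integral_capped_riesz[OF \<Omega> m(1)] lim]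
    by (simp add: G_def o_def)
  moreover have "eventually (\<lambda>j. G m (X (r j)) \<le> T) sequentially"
  proof (rule eventually_sequentiallyI)
    fix j assume "nat \<lceil>m\<rceil> \<le> j"
    then have "m \<le> real (r j) + 1" using seq_suble[OF \<open>strict_mono r\<close>, of j] by linarith
    then show "G m (X (r j)) \<le> T" using G_mono[OF m(1)] X(2)[of "r j"] by (meson order.trans less_imp_le)
  qed
  ultimately have "G m l \<le> T" by (rule tendsto_upperbound) simp
  with m show False by simp
qed

section \<open>Bounded minorants of the singular kernel\<close>

lemma kern_nonneg: "0 \<le> kern s x y"
  by (simp add: kern_def)

lemma kern_commute: "kern s x y = kern s y x"
  by (simp add: kern_def norm_minus_commute)

lemma borel_measurable_kern [measurable]:
  "(\<lambda>p. kern s (fst p) (snd p)) \<in> borel_measurable (lebesgue_on S \<Otimes>\<^sub>M lebesgue_on T)"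
  unfolding kern_def by measurable

lemma capped_riesz_le_kern:
  fixes x y :: "'a::euclidean_space"
  assumes "0 \<le> s" "s \<le> 1" "x \<noteq> y" "dist x y \<le> D" "1 \<le> D"
  shows "capped_riesz m (x - y) / D\<^sup>2 \<le> kern s x y"
proof -
  define r where "r = norm (x - y)"
  have r: "0 < r" "r \<le> D" using assms by (auto simp: r_def dist_norm)
  have "r powr (2 * s) \<le> D powr (2 * s)" using r assms by (intro powr_mono2) auto
  also have "\<dots> \<le> D powr 2" using assms by (intro powr_mono) auto
  finally have "r ^ DIM('a) * r powr (2 * s) \<le> r ^ DIM('a) * D\<^sup>2"
    using r assms by (intro mult_left_mono) (auto simp: powr_realpow)
  then have "1 / (r ^ DIM('a) * D\<^sup>2) \<le> kern s x y"
    using r by (simp add: kern_def r_def[symmetric] powr_add powr_realpow frac_le)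
  moreover have "capped_riesz m (x - y) / D\<^sup>2 \<le> 1 / r ^ DIM('a) / D\<^sup>2"
    using capped_riesz_le_riesz[of "x - y" m] assms by (intro divide_right_mono) (auto simp: r_def)
  ultimately show ?thesis by simp
qed

definition kernel_minorant ::
  "real \<Rightarrow> 'a::euclidean_space set \<Rightarrow> real \<Rightarrow> real \<Rightarrow> ('a \<times> 'a \<Rightarrow> real) \<Rightarrow> bool" where
  "kernel_minorant s \<Omega> A B K \<longleftrightarrow>
     K \<in> borel_measurable (lebesgue_on \<Omega> \<Otimes>\<^sub>M lebesgue_on \<Omega>) \<and>
     (\<forall>x y. 0 \<le> K (x, y) \<and> K (x, y) \<le> kern s x y \<and> K (x, y) \<le> B \<and> K (x, y) = K (y, x)) \<and>
     (\<forall>x\<in>\<Omega>. A \<le> (\<integral>y. K (x, y) \<partial>lebesgue_on \<Omega>))"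

lemma kernel_minorant_exists:
  fixes \<Omega> :: "'a::euclidean_space set"
  assumes "bounded \<Omega>" "open \<Omega>" "lipschitz_set \<Omega>"
  shows "\<exists>B\<ge>0. \<forall>s. 0 \<le> s \<longrightarrow> s \<le> 1 \<longrightarrow> (\<exists>K. kernel_minorant s \<Omega> A B K)"
proof -
  define D where "D = max 1 (diameter \<Omega>)"
  have D: "1 \<le> D" "\<And>x y. x \<in> \<Omega> \<Longrightarrow> y \<in> \<Omega> \<Longrightarrow> dist x y \<le> D"
    using diameter_bounded_bound[OF \<open>bounded \<Omega>\<close>] by (auto simp: D_def intro: le_max_iff_disj[THEN iffD2])
  obtain m where m: "0 < m" "\<And>x. x \<in> \<Omega> \<Longrightarrow> D\<^sup>2 * A \<le> (\<integral>y. capped_riesz m (x - y) \<partial>lebesgue_on \<Omega>)"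
    using integral_capped_riesz_uniformly_large[OF assms] by blast
  have "kernel_minorant s \<Omega> A (m / D\<^sup>2) (\<lambda>p. min (kern s (fst p) (snd p)) (capped_riesz m (fst p - snd p) / D\<^sup>2))"
    if s: "0 \<le> s" "s \<le> 1" for s
    unfolding kernel_minorant_def fst_conv snd_conv
  proof (intro conjI allI ballI)
    fix x y
    show "min (kern s x y) (capped_riesz m (x - y) / D\<^sup>2) \<le> m / D\<^sup>2"
      using capped_riesz_le[OF m(1), of "x - y"]
      by (simp add: min.coboundedI2 divide_right_mono del: min_le_iff_disj)
    show "min (kern s x y) (capped_riesz m (x - y) / D\<^sup>2) = min (kern s y x) (capped_riesz m (y - x) / D\<^sup>2)"
      by (simp add: kern_commute capped_riesz_def norm_minus_commute)
  next
    fix x assume "x \<in> \<Omega>"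
    have "AE y in lebesgue_on \<Omega>. y \<noteq> x"
      using \<open>x \<in> \<Omega>\<close> \<open>open \<Omega>\<close> by (intro AE_I'[of "{x}"]) (auto simp: sets.sets_into_space)
    then have "AE y in lebesgue_on \<Omega>. min (kern s x y) (capped_riesz m (x - y) / D\<^sup>2) = capped_riesz m (x - y) / D\<^sup>2"
      using AE_space
    proof eventually_elim
      case (elim y)
      then show ?case using capped_riesz_le_kern[OF s, of x y D m] D \<open>x \<in> \<Omega>\<close> by auto
    qed
    then have "(\<integral>y. min (kern s x y) (capped_riesz m (x - y) / D\<^sup>2) \<partial>lebesgue_on \<Omega>)
        = (\<integral>y. capped_riesz m (x - y) \<partial>lebesgue_on \<Omega>) / D\<^sup>2"
      by (subst integral_cong_AE[where g="\<lambda>y. capped_riesz m (x - y) / D\<^sup>2"]) (auto simp: kern_def)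
    moreover have "A \<le> (\<integral>y. capped_riesz m (x - y) \<partial>lebesgue_on \<Omega>) / D\<^sup>2"
      using m(2)[OF \<open>x \<in> \<Omega>\<close>] D(1) by (simp add: field_simps)
    ultimately show "A \<le> (\<integral>y. min (kern s x y) (capped_riesz m (x - y) / D\<^sup>2) \<partial>lebesgue_on \<Omega>)"
      by simp
  qed (auto simp: kern_nonneg capped_riesz_nonneg)
  then show ?thesis using m(1) by (intro exI[of _ "m / D\<^sup>2"]) auto
qed

section \<open>The truncation argument\<close>

lemma abs_le_half_one_plus_square: "\<bar>x :: real\<bar> \<le> (1 + x\<^sup>2) / 2"
  using sum_squares_bound[of "\<bar>x\<bar>" 1] by simp

lemma L2_integrable:
  assumes "\<Omega> \<in> lmeasurable" "u \<in> L2 \<Omega>"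
  shows "integrable (lebesgue_on \<Omega>) u"
proof (rule Bochner_Integration.integrable_bound)
  interpret finite_measure "lebesgue_on \<Omega>" using assms(1) by (rule finite_measure_lebesgue_on)
  show "integrable (lebesgue_on \<Omega>) (\<lambda>x. (1 + (u x)\<^sup>2) / 2)"
    using assms(2) by (auto simp: L2_def)
  show "AE x in lebesgue_on \<Omega>. norm (u x) \<le> norm ((1 + (u x)\<^sup>2) / 2)"
    using abs_le_half_one_plus_square by (intro AE_I2) simp
qed (use assms(2) in \<open>simp add: L2_def\<close>)

lemma integral_abs_le_L2_norm:
  assumes "\<Omega> \<in> lmeasurable" "u \<in> L2 \<Omega>"
  shows "(\<integral>x. \<bar>u x\<bar> \<partial>lebesgue_on \<Omega>) \<le> (measure lebesgue \<Omega> + (L2_norm \<Omega> u)\<^sup>2) / 2"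
proof -
  interpret finite_measure "lebesgue_on \<Omega>" using assms(1) by (rule finite_measure_lebesgue_on)
  have u2: "integrable (lebesgue_on \<Omega>) (\<lambda>x. (u x)\<^sup>2)" using assms(2) by (simp add: L2_def)
  have "(\<integral>x. \<bar>u x\<bar> \<partial>lebesgue_on \<Omega>) \<le> (\<integral>x. (1 + (u x)\<^sup>2) / 2 \<partial>lebesgue_on \<Omega>)"
    using L2_integrable[OF assms] u2 abs_le_half_one_plus_square by (intro integral_mono) auto
  also have "\<dots> = (measure lebesgue \<Omega> + (\<integral>x. (u x)\<^sup>2 \<partial>lebesgue_on \<Omega>)) / 2"
    using u2 assms(1) by (simp add: measure_restrict_space)
  also have "(\<integral>x. (u x)\<^sup>2 \<partial>lebesgue_on \<Omega>) = (L2_norm \<Omega> u)\<^sup>2"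
    by (simp add: L2_norm_def integral_nonneg)
  finally show ?thesis .
qed

lemma mult_diff_pos_part_nonneg: "0 \<le> (p - q) * (max (p - k) 0 - max (q - k) (0 :: real))"
  by (cases "p \<le> k"; cases "q \<le> k") (simp_all add: max_def mult_nonpos_nonpos)

lemma abs_diff_pos_part_le: "\<bar>max (p - k) 0 - max (q - k) 0\<bar> \<le> \<bar>p - q :: real\<bar>"
  by (cases "p \<le> k"; cases "q \<le> k") (simp_all add: max_def)

lemma Hs_pos_part:
  assumes u: "u \<in> Hs s \<Omega>" and "0 \<le> k"
  shows "(\<lambda>x. max (u x - k) 0) \<in> Hs s \<Omega>"
proof -
  have [measurable]: "u \<in> borel_measurable (lebesgue_on \<Omega>)" using u by (simp add: Hs_def L2_def)
  have "integrable (lebesgue_on \<Omega>) (\<lambda>x. (max (u x - k) 0)\<^sup>2)"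
  proof (rule Bochner_Integration.integrable_bound)
    show "integrable (lebesgue_on \<Omega>) (\<lambda>x. (u x)\<^sup>2)" using u by (simp add: Hs_def L2_def)
    have "(max (u x - k) 0)\<^sup>2 \<le> \<bar>u x\<bar>\<^sup>2" for x using \<open>0 \<le> k\<close> by (intro power_mono) auto
    then show "AE x in lebesgue_on \<Omega>. norm ((max (u x - k) 0)\<^sup>2) \<le> norm ((u x)\<^sup>2)"
      by (intro AE_I2) simp
  qed simp
  moreover have "integrable (lebesgue_on \<Omega> \<Otimes>\<^sub>M lebesgue_on \<Omega>)
      (\<lambda>(x, y). (max (u x - k) 0 - max (u y - k) 0)\<^sup>2 * kern s x y)"
  proof (rule Bochner_Integration.integrable_bound)
    show "integrable (lebesgue_on \<Omega> \<Otimes>\<^sub>M lebesgue_on \<Omega>) (\<lambda>(x, y). (u x - u y)\<^sup>2 * kern s x y)"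
      using u by (simp add: Hs_def)
    show "AE p in lebesgue_on \<Omega> \<Otimes>\<^sub>M lebesgue_on \<Omega>.
        norm ((\<lambda>(x, y). (max (u x - k) 0 - max (u y - k) 0)\<^sup>2 * kern s x y) p)
          \<le> norm ((\<lambda>(x, y). (u x - u y)\<^sup>2 * kern s x y) p)"
    proof (intro AE_I2, clarify)
      fix x y
      have "(max (u x - k) 0 - max (u y - k) 0)\<^sup>2 \<le> (u x - u y)\<^sup>2"
        using abs_diff_pos_part_le by (simp add: abs_le_square_iff)
      then show "norm ((max (u x - k) 0 - max (u y - k) 0)\<^sup>2 * kern s x y)
          \<le> norm ((u x - u y)\<^sup>2 * kern s x y)"
        using kern_nonneg[of s x y] by (simp add: mult_right_mono)
    qed
  qed (simp add: case_prod_beta)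
  ultimately show ?thesis by (simp add: Hs_def L2_def)
qed

lemma Hs_uminus: "u \<in> Hs s \<Omega> \<Longrightarrow> (\<lambda>x. - u x) \<in> Hs s \<Omega>"
  by (simp add: Hs_def L2_def power2_commute)

lemma weak_solution_uminus:
  assumes "weak_solution s \<Omega> V f u"
  shows "weak_solution s \<Omega> V (\<lambda>x. - f x) (\<lambda>x. - u x)"
proof -
  have Es_uminus: "Es s \<Omega> (\<lambda>x. - u x) \<phi> = - Es s \<Omega> u \<phi>" for \<phi>
  proof -
    have "(\<lambda>(x, y). (- u x - - u y) * (\<phi> x - \<phi> y) * kern s x y)
        = (\<lambda>p. - (\<lambda>(x, y). (u x - u y) * (\<phi> x - \<phi> y) * kern s x y) p)"
      by (auto simp: fun_eq_iff algebra_simps)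
    then show ?thesis unfolding Es_def by (simp only: Bochner_Integration.integral_minus)
  qed
  show ?thesis
    unfolding weak_solution_def
  proof (intro conjI ballI)
    show "(\<lambda>x. - u x) \<in> Hs s \<Omega>" using assms by (simp add: weak_solution_def Hs_uminus)
    fix \<phi> assume "\<phi> \<in> Hs s \<Omega>"
    then have "Es s \<Omega> u \<phi> + (\<integral>x. V x * u x * \<phi> x \<partial>lebesgue_on \<Omega>) = (\<integral>x. f x * \<phi> x \<partial>lebesgue_on \<Omega>)"
      using assms by (simp add: weak_solution_def)
    then show "Es s \<Omega> (\<lambda>x. - u x) \<phi> + (\<integral>x. V x * - u x * \<phi> x \<partial>lebesgue_on \<Omega>)
        = (\<integral>x. - f x * \<phi> x \<partial>lebesgue_on \<Omega>)"
      using Es_uminus[of \<phi>] by (simp add: Bochner_Integration.integral_minus)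
  qed
qed

lemma integral_add_swap:
  fixes G :: "'a \<times> 'a \<Rightarrow> real"
  assumes "sigma_finite_measure M" and G: "integrable (M \<Otimes>\<^sub>M M) G"
  shows "(\<integral>p. G p + G (snd p, fst p) \<partial>(M \<Otimes>\<^sub>M M)) = 2 * integral\<^sup>L (M \<Otimes>\<^sub>M M) G"
proof -
  interpret pair_sigma_finite M M using assms(1) by (simp add: pair_sigma_finite_def)
  have "integrable (M \<Otimes>\<^sub>M M) (\<lambda>p. G (snd p, fst p))"
    using integrable_product_swap[OF G] by (simp add: case_prod_beta')
  moreover have "(\<integral>p. G (snd p, fst p) \<partial>(M \<Otimes>\<^sub>M M)) = integral\<^sup>L (M \<Otimes>\<^sub>M M) G"
    using integral_product_swap[of G] G by (simp add: case_prod_beta')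
  ultimately show ?thesis using G by simp
qed

lemma integrable_pair_measure_fst_snd:
  fixes g :: "'a \<Rightarrow> real"
  assumes "finite_measure M" and g: "integrable M g"
  shows "integrable (M \<Otimes>\<^sub>M M) (\<lambda>p. g (fst p))" and "integrable (M \<Otimes>\<^sub>M M) (\<lambda>p. g (snd p))"
proof -
  interpret finite_measure M by fact
  interpret pair_sigma_finite M M by (simp add: pair_sigma_finite_def sigma_finite_measure_axioms)
  have [measurable]: "g \<in> borel_measurable M" using g by simp
  show fst: "integrable (M \<Otimes>\<^sub>M M) (\<lambda>p. g (fst p))"
    using g by (intro Fubini_integrable) (auto simp: mult.commute)
  show "integrable (M \<Otimes>\<^sub>M M) (\<lambda>p. g (snd p))"
    using integrable_product_swap[OF fst] by (simp add: case_prod_beta')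
qed

lemma integral_minorant_product_ge:
  fixes u w :: "'a \<Rightarrow> real" and K :: "'a \<times> 'a \<Rightarrow> real"
  assumes "finite_measure M" and [measurable]: "K \<in> borel_measurable (M \<Otimes>\<^sub>M M)"
    and K: "\<And>x y. 0 \<le> K (x, y)" "\<And>x y. K (x, y) \<le> B"
    and row: "\<And>x. x \<in> space M \<Longrightarrow> A \<le> (\<integral>y. K (x, y) \<partial>M)"
    and u: "integrable M u" and w: "integrable M w" "\<And>x. 0 \<le> w x"
    and uw: "integrable M (\<lambda>x. u x * w x)" "\<And>x. 0 \<le> u x * w x"
    and G: "integrable (M \<Otimes>\<^sub>M M) (\<lambda>p. w (fst p) * (u (fst p) - u (snd p)) * K p)"
  shows "A * (\<integral>x. u x * w x \<partial>M) - B * (\<integral>x. \<bar>u x\<bar> \<partial>M) * (\<integral>x. w x \<partial>M)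
    \<le> (\<integral>p. w (fst p) * (u (fst p) - u (snd p)) * K p \<partial>(M \<Otimes>\<^sub>M M))"
proof -
  interpret finite_measure M by fact
  interpret pair_sigma_finite M M by (simp add: pair_sigma_finite_def sigma_finite_measure_axioms)
  define U where "U = (\<integral>x. \<bar>u x\<bar> \<partial>M)"
  have "AE x in M. A * (u x * w x) - B * U * w x \<le> (\<integral>y. w x * (u x - u y) * K (x, y) \<partial>M)"
    using AE_integrable_fst'[OF G] AE_space
  proof eventually_elim
    case (elim x)
    have K_int: "integrable M (\<lambda>y. K (x, y))"
      using K elim by (intro integrable_const_bound[where B=B] AE_I2) (auto intro: measurable_Pair2)
    have "A * (u x * w x) - B * U * w x
        \<le> (u x * w x) * (\<integral>y. K (x, y) \<partial>M) - (\<integral>y. w x * \<bar>u y\<bar> * B \<partial>M)"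
      using mult_right_mono[OF row uw(2)[of x]] elim by (simp add: U_def algebra_simps)
    also have "\<dots> = (\<integral>y. u x * w x * K (x, y) - w x * \<bar>u y\<bar> * B \<partial>M)"
      using K_int u by simp
    also have "\<dots> \<le> (\<integral>y. w x * (u x - u y) * K (x, y) \<partial>M)"
    proof (rule integral_mono)
      fix y
      have "w x * (u y * K (x, y)) \<le> w x * (\<bar>u y\<bar> * B)"
        using K w(2)[of x] by (intro mult_left_mono mult_mono) auto
      then show "u x * w x * K (x, y) - w x * \<bar>u y\<bar> * B \<le> w x * (u x - u y) * K (x, y)"
        by (simp add: algebra_simps)
    qed (use K_int u elim in simp_all)
    finally show ?case .
  qed
  then have "(\<integral>x. A * (u x * w x) - B * U * w x \<partial>M)
      \<le> (\<integral>x. (\<integral>y. w x * (u x - u y) * K (x, y) \<partial>M) \<partial>M)"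
    using uw w integrable_fst'[OF G] by (intro integral_mono_AE) auto
  also have "\<dots> = (\<integral>p. w (fst p) * (u (fst p) - u (snd p)) * K p \<partial>(M \<Otimes>\<^sub>M M))"
    using integral_fst'[OF G] by simp
  finally show ?thesis using uw w by (simp add: U_def)
qed

lemma integrable_minorant_product:
  fixes u w :: "'a \<Rightarrow> real" and K :: "'a \<times> 'a \<Rightarrow> real"
  assumes "finite_measure M"
    and [measurable]: "u \<in> borel_measurable M" "w \<in> borel_measurable M" "K \<in> borel_measurable (M \<Otimes>\<^sub>M M)"
    and u2: "integrable M (\<lambda>x. (u x)\<^sup>2)" and w: "\<And>x. 0 \<le> w x" "\<And>x. w x \<le> \<bar>u x\<bar>"
    and K: "\<And>x y. 0 \<le> K (x, y)" "\<And>x y. K (x, y) \<le> B"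
  shows "integrable (M \<Otimes>\<^sub>M M) (\<lambda>p. w (fst p) * (u (fst p) - u (snd p)) * K p)"
proof (rule Bochner_Integration.integrable_bound)
  show "integrable (M \<Otimes>\<^sub>M M) (\<lambda>p. B * (2 * (u (fst p))\<^sup>2 + (u (snd p))\<^sup>2))"
    using integrable_pair_measure_fst_snd[OF assms(1) u2] by simp
  have "0 \<le> B" using K by (meson order_trans)
  have "\<bar>w x * (u x - u y) * K (x, y)\<bar> \<le> B * (2 * (u x)\<^sup>2 + (u y)\<^sup>2)" for x y
  proof -
    have "2 * (\<bar>u x\<bar> * \<bar>u y\<bar>) \<le> (u x)\<^sup>2 + (u y)\<^sup>2"
      using sum_squares_bound[of "\<bar>u x\<bar>" "\<bar>u y\<bar>"] by (simp add: mult.assoc)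
    moreover have "\<bar>u x\<bar> * (\<bar>u x\<bar> + \<bar>u y\<bar>) = (u x)\<^sup>2 + \<bar>u x\<bar> * \<bar>u y\<bar>"
      by (simp add: power2_eq_square algebra_simps)
    moreover have "0 \<le> \<bar>u x\<bar> * \<bar>u y\<bar>" by simp
    ultimately have "\<bar>u x\<bar> * (\<bar>u x\<bar> + \<bar>u y\<bar>) \<le> 2 * (u x)\<^sup>2 + (u y)\<^sup>2" by linarith
    moreover have "w x * \<bar>u x - u y\<bar> \<le> \<bar>u x\<bar> * (\<bar>u x\<bar> + \<bar>u y\<bar>)"
      using w by (intro mult_mono abs_triangle_ineq4) auto
    ultimately have "w x * \<bar>u x - u y\<bar> * K (x, y) \<le> (2 * (u x)\<^sup>2 + (u y)\<^sup>2) * B"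
      using K by (intro mult_mono) auto
    then show ?thesis using w K by (simp add: abs_mult mult.commute)
  qed
  then have "norm (w (fst p) * (u (fst p) - u (snd p)) * K p)
      \<le> norm (B * (2 * (u (fst p))\<^sup>2 + (u (snd p))\<^sup>2))" for p
    using \<open>0 \<le> B\<close> by (cases p) simp
  then show "AE p in M \<Otimes>\<^sub>M M. norm (w (fst p) * (u (fst p) - u (snd p)) * K p)
      \<le> norm (B * (2 * (u (fst p))\<^sup>2 + (u (snd p))\<^sup>2))"
    by (intro AE_I2)
qed measurable

lemma integrable_Es_integrand:
  fixes u w :: "'a::euclidean_space \<Rightarrow> real" and L :: "'a \<Rightarrow> 'a \<Rightarrow> real"
  assumes u: "u \<in> Hs s \<Omega>" and [measurable]: "w \<in> borel_measurable (lebesgue_on \<Omega>)"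
    and [measurable]: "(\<lambda>p. L (fst p) (snd p)) \<in> borel_measurable (lebesgue_on \<Omega> \<Otimes>\<^sub>M lebesgue_on \<Omega>)"
    and mono: "\<And>x y. 0 \<le> (u x - u y) * (w x - w y)"
    and contr: "\<And>x y. \<bar>w x - w y\<bar> \<le> \<bar>u x - u y\<bar>"
    and L: "\<And>x y. 0 \<le> L x y" "\<And>x y. L x y \<le> kern s x y"
  shows "integrable (lebesgue_on \<Omega> \<Otimes>\<^sub>M lebesgue_on \<Omega>) (\<lambda>(x, y). (u x - u y) * (w x - w y) * L x y)"
proof (rule Bochner_Integration.integrable_bound)
  have [measurable]: "u \<in> borel_measurable (lebesgue_on \<Omega>)" using u by (simp add: Hs_def L2_def)
  then show "(\<lambda>(x, y). (u x - u y) * (w x - w y) * L x y)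
      \<in> borel_measurable (lebesgue_on \<Omega> \<Otimes>\<^sub>M lebesgue_on \<Omega>)"
    by measurable
  show "integrable (lebesgue_on \<Omega> \<Otimes>\<^sub>M lebesgue_on \<Omega>) (\<lambda>(x, y). (u x - u y)\<^sup>2 * kern s x y)"
    using u by (simp add: Hs_def)
  have "\<bar>(u x - u y) * (w x - w y) * L x y\<bar> \<le> \<bar>(u x - u y)\<^sup>2 * kern s x y\<bar>" for x y
  proof -
    have "(u x - u y) * (w x - w y) \<le> \<bar>u x - u y\<bar> * \<bar>w x - w y\<bar>" by (simp add: abs_mult[symmetric])
    also have "\<dots> \<le> \<bar>u x - u y\<bar> * \<bar>u x - u y\<bar>" by (rule mult_left_mono[OF contr abs_ge_zero])
    finally have "(u x - u y) * (w x - w y) * L x y \<le> (u x - u y)\<^sup>2 * kern s x y"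
      using mono L kern_nonneg by (intro mult_mono) (auto simp: power2_eq_square)
    then show ?thesis using mono L by simp
  qed
  then show "AE p in lebesgue_on \<Omega> \<Otimes>\<^sub>M lebesgue_on \<Omega>.
      norm ((\<lambda>(x, y). (u x - u y) * (w x - w y) * L x y) p)
        \<le> norm ((\<lambda>(x, y). (u x - u y)\<^sup>2 * kern s x y) p)"
    by (intro AE_I2) (simp add: case_prod_beta')
qed

lemma Es_ge_minorant:
  fixes u w :: "'a::euclidean_space \<Rightarrow> real" and K :: "'a \<times> 'a \<Rightarrow> real"
  assumes \<Omega>: "\<Omega> \<in> lmeasurable" and u: "u \<in> Hs s \<Omega>"
    and w: "w \<in> borel_measurable (lebesgue_on \<Omega>)"
    and mono: "\<And>x y. 0 \<le> (u x - u y) * (w x - w y)"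
    and contr: "\<And>x y. \<bar>w x - w y\<bar> \<le> \<bar>u x - u y\<bar>"
    and [measurable]: "K \<in> borel_measurable (lebesgue_on \<Omega> \<Otimes>\<^sub>M lebesgue_on \<Omega>)"
    and K: "\<And>x y. 0 \<le> K (x, y)" "\<And>x y. K (x, y) \<le> kern s x y" "\<And>x y. K (x, y) = K (y, x)"
    and G: "integrable (lebesgue_on \<Omega> \<Otimes>\<^sub>M lebesgue_on \<Omega>)
      (\<lambda>p. w (fst p) * (u (fst p) - u (snd p)) * K p)"
  shows "(\<integral>p. w (fst p) * (u (fst p) - u (snd p)) * K p \<partial>(lebesgue_on \<Omega> \<Otimes>\<^sub>M lebesgue_on \<Omega>))
    \<le> Es s \<Omega> u w"
proof -
  let ?M = "lebesgue_on \<Omega> \<Otimes>\<^sub>M lebesgue_on \<Omega>"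
  note integrable = integrable_Es_integrand[OF u w _ mono contr]
  have "2 * (\<integral>p. w (fst p) * (u (fst p) - u (snd p)) * K p \<partial>?M)
      = (\<integral>p. w (fst p) * (u (fst p) - u (snd p)) * K p + w (snd p) * (u (snd p) - u (fst p)) * K p \<partial>?M)"
    using integral_add_swap[OF _ G] K(3) finite_measure.axioms(1)[OF finite_measure_lebesgue_on[OF \<Omega>]]
    by simp
  also have "\<dots> = (\<integral>(x, y). (u x - u y) * (w x - w y) * K (x, y) \<partial>?M)"
    by (intro Bochner_Integration.integral_cong) (auto simp: algebra_simps)
  also have "\<dots> \<le> (\<integral>(x, y). (u x - u y) * (w x - w y) * kern s x y \<partial>?M)"
  proof (rule integral_mono)
    show "integrable ?M (\<lambda>(x, y). (u x - u y) * (w x - w y) * K (x, y))"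
      using integrable[of "\<lambda>x y. K (x, y)"] K by simp
    show "integrable ?M (\<lambda>(x, y). (u x - u y) * (w x - w y) * kern s x y)"
      using integrable[of "kern s", OF _ kern_nonneg order_refl] by simp
    show "(\<lambda>(x, y). (u x - u y) * (w x - w y) * K (x, y)) p
        \<le> (\<lambda>(x, y). (u x - u y) * (w x - w y) * kern s x y) p" for p
      using K mono by (cases p) (auto intro: mult_left_mono)
  qed
  also have "\<dots> = 2 * Es s \<Omega> u w" by (simp add: Es_def)
  finally show ?thesis by simp
qed

lemma L2_mult_integrable:
  assumes "u \<in> L2 \<Omega>" "v \<in> L2 \<Omega>"
  shows "integrable (lebesgue_on \<Omega>) (\<lambda>x. u x * v x)"
proof (rule Bochner_Integration.integrable_bound)
  show "integrable (lebesgue_on \<Omega>) (\<lambda>x. (u x)\<^sup>2 + (v x)\<^sup>2)" using assms by (simp add: L2_def)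
  have "\<bar>u x * v x\<bar> \<le> (u x)\<^sup>2 + (v x)\<^sup>2" for x
  proof -
    have "2 * (\<bar>u x\<bar> * \<bar>v x\<bar>) \<le> (u x)\<^sup>2 + (v x)\<^sup>2"
      using sum_squares_bound[of "\<bar>u x\<bar>" "\<bar>v x\<bar>"] by (simp add: mult.assoc)
    moreover have "0 \<le> \<bar>u x\<bar> * \<bar>v x\<bar>" by simp
    ultimately show ?thesis unfolding abs_mult by linarith
  qed
  then show "AE x in lebesgue_on \<Omega>. norm (u x * v x) \<le> norm ((u x)\<^sup>2 + (v x)\<^sup>2)" by (intro AE_I2) simp
qed (use assms in \<open>auto simp: L2_def intro!: borel_measurable_times\<close>)

lemma integrable_mult_AE_bounded:
  fixes g h :: "'a \<Rightarrow> real"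
  assumes "integrable M g" "h \<in> borel_measurable M" "AE x in M. \<bar>h x\<bar> \<le> c"
  shows "integrable M (\<lambda>x. h x * g x)"
proof (rule Bochner_Integration.integrable_bound)
  show "integrable M (\<lambda>x. c * \<bar>g x\<bar>)" using assms(1) by simp
  show "AE x in M. norm (h x * g x) \<le> norm (c * \<bar>g x\<bar>)"
    using assms(3) by eventually_elim (auto simp: abs_mult intro: mult_right_mono)
qed (use assms in simp)

lemma Es_le_of_weak_solution:
  assumes \<Omega>: "\<Omega> \<in> lmeasurable" and ws: "weak_solution s \<Omega> V f u"
    and \<phi>: "\<phi> \<in> Hs s \<Omega>" "\<And>x. 0 \<le> \<phi> x" "\<And>x. 0 \<le> u x * \<phi> x"
    and Vf: "V \<in> borel_measurable (lebesgue_on \<Omega>)" "f \<in> borel_measurable (lebesgue_on \<Omega>)"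
    and V: "AE x in lebesgue_on \<Omega>. \<bar>V x\<bar> \<le> a" and f: "AE x in lebesgue_on \<Omega>. \<bar>f x\<bar> \<le> b"
  shows "Es s \<Omega> u \<phi> \<le> b * (\<integral>x. \<phi> x \<partial>lebesgue_on \<Omega>) + a * (\<integral>x. u x * \<phi> x \<partial>lebesgue_on \<Omega>)"
proof -
  have u: "u \<in> Hs s \<Omega>" using ws by (simp add: weak_solution_def)
  have \<phi>_int: "integrable (lebesgue_on \<Omega>) \<phi>" using L2_integrable[OF \<Omega>] \<phi>(1) by (simp add: Hs_def)
  have u\<phi>_int: "integrable (lebesgue_on \<Omega>) (\<lambda>x. u x * \<phi> x)"
    using u \<phi>(1) by (intro L2_mult_integrable) (simp_all add: Hs_def)
  have "(\<integral>x. f x * \<phi> x \<partial>lebesgue_on \<Omega>) \<le> (\<integral>x. b * \<phi> x \<partial>lebesgue_on \<Omega>)"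
    using \<phi>_int integrable_mult_AE_bounded[OF \<phi>_int Vf(2) f] f
    by (intro integral_mono_AE) (auto elim!: eventually_mono intro: mult_right_mono \<phi>(2))
  moreover have "(\<integral>x. - V x * (u x * \<phi> x) \<partial>lebesgue_on \<Omega>) \<le> (\<integral>x. a * (u x * \<phi> x) \<partial>lebesgue_on \<Omega>)"
  proof (rule integral_mono_AE)
    show "AE x in lebesgue_on \<Omega>. - V x * (u x * \<phi> x) \<le> a * (u x * \<phi> x)"
      using V
    proof eventually_elim
      case (elim x)
      then show ?case using mult_right_mono[OF _ \<phi>(3), of "- V x" a x] by simp
    qed
  qed (use u\<phi>_int integrable_mult_AE_bounded[OF u\<phi>_int Vf(1) V] in auto)
  moreover have "Es s \<Omega> u \<phi> + (\<integral>x. V x * (u x * \<phi> x) \<partial>lebesgue_on \<Omega>) = (\<integral>x. f x * \<phi> x \<partial>lebesgue_on \<Omega>)"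
    using ws \<phi>(1) by (simp add: weak_solution_def mult.assoc)
  ultimately show ?thesis by simp
qed

lemma Es_pos_part_ge:
  assumes \<Omega>: "\<Omega> \<in> lmeasurable" and u: "u \<in> Hs s \<Omega>" and K: "kernel_minorant s \<Omega> A B K"
    and "0 \<le> k"
  defines "w \<equiv> \<lambda>x. max (u x - k) 0"
  shows "A * (\<integral>x. u x * w x \<partial>lebesgue_on \<Omega>)
      - B * (\<integral>x. \<bar>u x\<bar> \<partial>lebesgue_on \<Omega>) * (\<integral>x. w x \<partial>lebesgue_on \<Omega>) \<le> Es s \<Omega> u w"
proof -
  let ?M = "lebesgue_on \<Omega>"
  have w: "w \<in> Hs s \<Omega>" unfolding w_def using Hs_pos_part[OF u \<open>0 \<le> k\<close>] .
  have [measurable]: "u \<in> borel_measurable ?M" "w \<in> borel_measurable ?M"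
    using u w by (simp_all add: Hs_def L2_def)
  have w_nonneg: "0 \<le> w x" and w_le: "w x \<le> \<bar>u x\<bar>" and uw_nonneg: "0 \<le> u x * w x" for x
    using \<open>0 \<le> k\<close> by (auto simp: w_def max_def)
  from K have [measurable]: "K \<in> borel_measurable (?M \<Otimes>\<^sub>M ?M)"
    and K_le: "\<And>x y. 0 \<le> K (x, y)" "\<And>x y. K (x, y) \<le> kern s x y" "\<And>x y. K (x, y) \<le> B"
      "\<And>x y. K (x, y) = K (y, x)"
    and row: "\<And>x. x \<in> \<Omega> \<Longrightarrow> A \<le> (\<integral>y. K (x, y) \<partial>?M)"
    by (auto simp: kernel_minorant_def)
  have G: "integrable (?M \<Otimes>\<^sub>M ?M) (\<lambda>p. w (fst p) * (u (fst p) - u (snd p)) * K p)"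
    using u w_nonneg w_le K_le
    by (intro integrable_minorant_product finite_measure_lebesgue_on[OF \<Omega>]) (auto simp: Hs_def L2_def)
  have "A * (\<integral>x. u x * w x \<partial>?M) - B * (\<integral>x. \<bar>u x\<bar> \<partial>?M) * (\<integral>x. w x \<partial>?M)
      \<le> (\<integral>p. w (fst p) * (u (fst p) - u (snd p)) * K p \<partial>(?M \<Otimes>\<^sub>M ?M))"
    using u w L2_integrable[OF \<Omega>] L2_mult_integrable[of u \<Omega> w]
    by (intro integral_minorant_product_ge[OF finite_measure_lebesgue_on[OF \<Omega>]] K_le row G
        w_nonneg uw_nonneg) (auto simp: Hs_def)
  also have "\<dots> \<le> Es s \<Omega> u w"
    using mult_diff_pos_part_nonneg abs_diff_pos_part_le
    by (intro Es_ge_minorant[OF \<Omega> u _ _ _ _ K_le(1,2,4) G]) (auto simp: w_def)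
  finally show ?thesis .
qed

lemma weak_solution_AE_le:
  assumes \<Omega>: "\<Omega> \<in> lmeasurable" and ws: "weak_solution s \<Omega> V f u"
    and Vf: "V \<in> borel_measurable (lebesgue_on \<Omega>)" "f \<in> borel_measurable (lebesgue_on \<Omega>)"
    and V: "AE x in lebesgue_on \<Omega>. \<bar>V x\<bar> \<le> a" and f: "AE x in lebesgue_on \<Omega>. \<bar>f x\<bar> \<le> b"
    and K: "kernel_minorant s \<Omega> (a + 1) B K"
    and k: "b + B * (\<integral>x. \<bar>u x\<bar> \<partial>lebesgue_on \<Omega>) \<le> k" "0 \<le> k"
  shows "AE x in lebesgue_on \<Omega>. u x \<le> k"
proof -
  let ?M = "lebesgue_on \<Omega>"
  define w where "w = (\<lambda>x. max (u x - k) 0)"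
  have u: "u \<in> Hs s \<Omega>" using ws by (simp add: weak_solution_def)
  have w: "w \<in> Hs s \<Omega>" unfolding w_def using Hs_pos_part[OF u k(2)] .
  have w_nonneg: "0 \<le> w x" and uw_nonneg: "0 \<le> u x * w x" for x
    using k(2) by (auto simp: w_def max_def)
  have w_int: "integrable ?M w" and uw_int: "integrable ?M (\<lambda>x. u x * w x)"
    using u w L2_integrable[OF \<Omega>] L2_mult_integrable[of u \<Omega> w] by (simp_all add: Hs_def)
  have "(a + 1) * (\<integral>x. u x * w x \<partial>?M) - B * (\<integral>x. \<bar>u x\<bar> \<partial>?M) * (\<integral>x. w x \<partial>?M) \<le> Es s \<Omega> u w"
    using Es_pos_part_ge[OF \<Omega> u K k(2)] unfolding w_def .
  also have "\<dots> \<le> b * (\<integral>x. w x \<partial>?M) + a * (\<integral>x. u x * w x \<partial>?M)"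
    using w w_nonneg uw_nonneg by (intro Es_le_of_weak_solution[OF \<Omega> ws _ _ _ Vf V f])
  finally have "(\<integral>x. u x * w x \<partial>?M) \<le> (b + B * (\<integral>x. \<bar>u x\<bar> \<partial>?M)) * (\<integral>x. w x \<partial>?M)"
    by (simp add: algebra_simps)
  also have "\<dots> \<le> k * (\<integral>x. w x \<partial>?M)"
    using k(1) w_nonneg by (intro mult_right_mono integral_nonneg) auto
  finally have "(\<integral>x. u x * w x \<partial>?M) \<le> k * (\<integral>x. w x \<partial>?M)" .
  moreover have "(w x)\<^sup>2 = u x * w x - k * w x" for x
    by (simp add: w_def max_def power2_eq_square algebra_simps)
  ultimately have "(\<integral>x. (w x)\<^sup>2 \<partial>?M) \<le> 0"
    using uw_int w_int by simp
  then have "AE x in ?M. (w x)\<^sup>2 = 0"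
    using w by (subst integral_nonneg_eq_0_iff_AE[symmetric]) (auto simp: Hs_def L2_def antisym)
  then show ?thesis by eventually_elim (simp add: w_def max_def split: if_splits)
qed

lemma AE_abs_le_Linf_norm:
  assumes "g \<in> Linf \<Omega>"
  shows "AE x in lebesgue_on \<Omega>. \<bar>g x\<bar> \<le> Linf_norm \<Omega> g"
proof -
  have "AE x in lebesgue_on \<Omega>. ereal \<bar>g x\<bar> \<le> esssup (lebesgue_on \<Omega>) (\<lambda>x. ereal \<bar>g x\<bar>)"
    by (rule esssup_AE)
  moreover have "esssup (lebesgue_on \<Omega>) (\<lambda>x. ereal \<bar>g x\<bar>) < \<infinity>" using assms by (simp add: Linf_def)
  ultimately show ?thesis
    unfolding Linf_norm_def by (cases "esssup (lebesgue_on \<Omega>) (\<lambda>x. ereal \<bar>g x\<bar>)") auto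
qed

lemma Linf_norm_le_of_AE_bound:
  assumes "u \<in> borel_measurable (lebesgue_on \<Omega>)" "AE x in lebesgue_on \<Omega>. \<bar>u x\<bar> \<le> k" "0 \<le> k"
  shows "u \<in> Linf \<Omega>" and "Linf_norm \<Omega> u \<le> k"
proof -
  have "esssup (lebesgue_on \<Omega>) (\<lambda>x. ereal \<bar>u x\<bar>) \<le> ereal k"
    using assms(2)
    by (intro esssup_I borel_measurable_ereal borel_measurable_abs assms(1)) (auto elim: eventually_mono)
  then show "u \<in> Linf \<Omega>" "Linf_norm \<Omega> u \<le> k"
    using assms(1,3) unfolding Linf_def Linf_norm_def
    by (auto simp: le_less_trans) (cases "esssup (lebesgue_on \<Omega>) (\<lambda>x. ereal \<bar>u x\<bar>)"; simp)
qed

lemma weak_solution_Linf_norm_le: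
  assumes \<Omega>: "\<Omega> \<in> lmeasurable" and ws: "weak_solution s \<Omega> V f u"
    and V: "V \<in> Linf \<Omega>" and f: "f \<in> Linf \<Omega>"
    and K: "kernel_minorant s \<Omega> (Linf_norm \<Omega> V + 1) B K" and "0 \<le> B"
  shows "u \<in> Linf \<Omega>"
    and "Linf_norm \<Omega> u \<le> max (Linf_norm \<Omega> f) 0 + B * ((measure lebesgue \<Omega> + (L2_norm \<Omega> u)\<^sup>2) / 2)"
proof -
  define k where "k = max (Linf_norm \<Omega> f) 0 + B * ((measure lebesgue \<Omega> + (L2_norm \<Omega> u)\<^sup>2) / 2)"
  have "0 \<le> k" using \<open>0 \<le> B\<close> by (simp add: k_def)
  have u: "u \<in> L2 \<Omega>" using ws by (simp add: weak_solution_def Hs_def)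
  have Vf: "V \<in> borel_measurable (lebesgue_on \<Omega>)" "f \<in> borel_measurable (lebesgue_on \<Omega>)"
    using V f by (simp_all add: Linf_def)
  note le_k = weak_solution_AE_le[OF \<Omega> _ Vf(1) _ AE_abs_le_Linf_norm[OF V] _ K _ \<open>0 \<le> k\<close>]
  have f_bound: "AE x in lebesgue_on \<Omega>. \<bar>f x\<bar> \<le> max (Linf_norm \<Omega> f) 0"
    using AE_abs_le_Linf_norm[OF f] by (auto elim: eventually_mono)
  have u_bound: "max (Linf_norm \<Omega> f) 0 + B * (\<integral>x. \<bar>u x\<bar> \<partial>lebesgue_on \<Omega>) \<le> k"
    using mult_left_mono[OF integral_abs_le_L2_norm[OF \<Omega> u] \<open>0 \<le> B\<close>] by (simp add: k_def)
  have "AE x in lebesgue_on \<Omega>. u x \<le> k" using le_k[OF ws Vf(2) f_bound u_bound] .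
  moreover have "AE x in lebesgue_on \<Omega>. - u x \<le> k"
    using le_k[OF weak_solution_uminus[OF ws]] Vf(2) f_bound u_bound by simp
  ultimately have "AE x in lebesgue_on \<Omega>. \<bar>u x\<bar> \<le> k" by eventually_elim auto
  then show "u \<in> Linf \<Omega>" "Linf_norm \<Omega> u \<le> k"
    using Linf_norm_le_of_AE_bound[of u \<Omega> k] u \<open>0 \<le> k\<close> by (simp_all add: L2_def)
qed

theorem theorem1p4:
  fixes \<Omega> :: "'a::euclidean_space set"
  assumes "bounded \<Omega>" and "open \<Omega>" and "lipschitz_set \<Omega>"
  shows "\<exists>C :: real \<Rightarrow> real \<Rightarrow> real \<Rightarrow> real. (\<forall>a b c. C a b c > 0) \<and>
    (\<forall>s V f u. 0 \<le> s \<and> s < 1 \<and> V \<in> Linf \<Omega> \<and> f \<in> Linf \<Omega> \<and> u \<in> Hs s \<Omega> \<and>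
       weak_solution s \<Omega> V f u \<longrightarrow>
       u \<in> Linf \<Omega> \<and> Linf_norm \<Omega> u \<le> C (Linf_norm \<Omega> V) (Linf_norm \<Omega> f) (L2_norm \<Omega> u))"
proof -
  have \<Omega>: "\<Omega> \<in> lmeasurable" using assms(1,2) by (rule lmeasurable_open)
  obtain B where B: "\<And>A. 0 \<le> B A" "\<And>A s. 0 \<le> s \<Longrightarrow> s \<le> 1 \<Longrightarrow> \<exists>K. kernel_minorant s \<Omega> A (B A) K"
    using kernel_minorant_exists[OF assms] by metis
  define C where "C a b c = max b 0 + B (a + 1) * ((measure lebesgue \<Omega> + c\<^sup>2) / 2) + 1" for a b c
  have "0 < C a b c" for a b c using B(1) by (simp add: C_def add_nonneg_pos)
  moreover have "u \<in> Linf \<Omega> \<and> Linf_norm \<Omega> u \<le> C (Linf_norm \<Omega> V) (Linf_norm \<Omega> f) (L2_norm \<Omega> u)"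
    if hyps: "0 \<le> s" "s < 1" "V \<in> Linf \<Omega>" "f \<in> Linf \<Omega>" "weak_solution s \<Omega> V f u" for s V f u
  proof -
    obtain K where "kernel_minorant s \<Omega> (Linf_norm \<Omega> V + 1) (B (Linf_norm \<Omega> V + 1)) K"
      using B(2) hyps(1,2) by fastforce
    from weak_solution_Linf_norm_le[OF \<Omega> hyps(5,3,4) this B(1)] show ?thesis by (simp add: C_def)
  qed
  ultimately show ?thesis by (intro exI[of _ C]) blast
qed

end
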